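(* Let $F$ be a nontrivial finite group, $\tfrac12<p<1$, $\lambda=\frac{p}{1-p}$, and let $R_n=((L_n(i))_i,S_n)$ be the stationary random walk on $F\wr\mathbb{Z}$ with parameter $p$. Let $\rho_0=0$, $\rho_k=\inf\{n>\rho_{k-1}:S_n=0\}$, and $N_k^+=|\{1\le j\le k: S_{\rho_{j-1}+1}>0\}|$. Then for every $k\ge1$ and $0\le m\le k$, \[\Pr(R_{\rho_k}=\mathrm{id}\mid N_k^+=m)=\frac{(|F|-1)^2}{|F|}\left(\sum_{a=1}^{\infty}|F|^{-a}\Big(1-\frac{\lambda-1}{\lambda^a-1}\Big)^m\right)\left(\sum_{b=1}^{\infty}|F|^{-b}\Big(1-\frac{\lambda-1}{\lambda^b-1}\Big)^{k-m}\right).\]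
   Context: Elements of $F\wr\mathbb{Z}$ are pairs $((L(i))_{i\in\mathbb{Z}},x)$ with $L:\mathbb{Z}\to F$ finitely supported and $x\in\mathbb{Z}$; $\mathrm{id}$ has all lamps $\mathrm{id}_F$ and $x=0$. $(S_n)$ is the Markov chain on $\mathbb{Z}$ with $S_0=0$ and $\Pr(S_{n+1}=x+1\mid S_n=x)$ equal to $p,\tfrac12,1-p$ for $x<0,x=0,x>0$ respectively, and $\Pr(S_{n+1}=x-1\mid S_n=x)$ equal to $1-p,\tfrac12,p$ respectively. $(U_n,V_n)_{n\ge1}$ are i.i.d. pairs of independent uniform elements of $F$, independent of $(S_n)$; $L_0\equiv\mathrm{id}_F$, $L_{n+1}(i)=L_n(i)$ for $i\notin\{S_n,S_{n+1}\}$, $L_{n+1}(S_n)=U_{n+1}$, $L_{n+1}(S_{n+1})=V_{n+1}$. Convention $0^0=1$. *)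

theory Defs
  imports "HOL-Probability.Probability"
begin

text \<open>Lamplighter group F wr Z: elements are pairs (L, x) with L :: int => 'f finitely
  supported and x :: int.  The finite group F is modelled by a type 'f of class
  group_add (not necessarily commutative); its identity element is 0.\<close>

definition step_pmf :: "real \<Rightarrow> ((bool \<times> bool) \<times> ('f::finite \<times> 'f)) pmf" where
  "step_pmf p = pair_pmf (pair_pmf (bernoulli_pmf p) (bernoulli_pmf (1/2)))
                         (pair_pmf (pmf_of_set UNIV) (pmf_of_set UNIV))"

definition walk_step :: "int \<Rightarrow> bool \<times> bool \<Rightarrow> int" where
  "walk_step x c =
     (if x < 0 then (if fst c then x + 1 else x - 1)
      else if x = 0 then (if snd c then x + 1 else x - 1)
      else (if fst c then x - 1 else x + 1))"

text \<open>The underlying probability space: i.i.d. innovations; the n-th entry of the stream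
  drives step n -> n+1.\<close>
definition lamp_space :: "real \<Rightarrow> ((bool \<times> bool) \<times> ('f::finite \<times> 'f)) stream measure" where
  "lamp_space p = stream_space (measure_pmf (step_pmf p))"

fun lpos :: "((bool \<times> bool) \<times> ('f \<times> 'f)) stream \<Rightarrow> nat \<Rightarrow> int" where
  "lpos \<omega> 0 = 0"
| "lpos \<omega> (Suc n) = walk_step (lpos \<omega> n) (fst (\<omega> !! n))"

fun lamps :: "((bool \<times> bool) \<times> ('f::group_add \<times> 'f)) stream \<Rightarrow> nat \<Rightarrow> int \<Rightarrow> 'f" where
  "lamps \<omega> 0 = (\<lambda>i. 0)"
| "lamps \<omega> (Suc n) =
     ((lamps \<omega> n)(lpos \<omega> n := fst (snd (\<omega> !! n))))
        (lpos \<omega> (Suc n) := snd (snd (\<omega> !! n)))"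

definition lstate :: "((bool \<times> bool) \<times> ('f::group_add \<times> 'f)) stream \<Rightarrow> nat \<Rightarrow> (int \<Rightarrow> 'f) \<times> int" where
  "lstate \<omega> n = (lamps \<omega> n, lpos \<omega> n)"

text \<open>Return times: rho_0 = 0, rho_{k+1} = inf {n > rho_k. S_n = 0}
  (these are almost surely finite since the walk is recurrent).\<close>
fun rho :: "((bool \<times> bool) \<times> ('f \<times> 'f)) stream \<Rightarrow> nat \<Rightarrow> nat" where
  "rho \<omega> 0 = 0"
| "rho \<omega> (Suc k) = (LEAST n. rho \<omega> k < n \<and> lpos \<omega> n = 0)"

definition Nplus :: "((bool \<times> bool) \<times> ('f \<times> 'f)) stream \<Rightarrow> nat \<Rightarrow> nat" where
  "Nplus \<omega> k = card {j \<in> {1..k}. lpos \<omega> (rho \<omega> (j - 1) + 1) > 0}"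

end

theory Submission
  imports Defs
begin

text \<open>Stop the walk at its \<open>k\<close>-th return to 0 and record how many of the \<open>k\<close> excursions
  started upwards. Since the walk is pushed towards 0 it returns almost surely, so this count is
  \<open>N\<^sub>k\<^sup>+\<close>, and by the symmetric step at 0 it is binomial with parameter 1/2. Given the path,
  every visited site carries a fresh uniform lamp at time \<open>\<rho>\<^sub>k\<close> (it was rewritten when the
  lamplighter last left it or arrived at it), so all lamps are off with probability
  \<open>|F|^-(H + L + 1)\<close>, where \<open>[-L, H]\<close> is the visited interval. Writing this power as
  \<open>(|F| - 1)\<^sup>2 / |F|\<close> times \<open>\<Sum>a>H. \<Sum>b>L. |F|^-a |F|^-b\<close> reduces the problem to the
  probability that all excursions stay inside \<open>(-b, a)\<close> with \<open>m\<close> of them positive. By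
  gambler's ruin a positive excursion stays below \<open>a\<close> with probability
  \<open>1 - (\<lambda> - 1) / (\<lambda>\<^sup>a - 1)\<close>, and similarly for negative ones, which gives
  \<open>C(k, m) / 2\<^sup>k\<close> times the product of the two series; dividing by
  \<open>P(N\<^sub>k\<^sup>+ = m) = C(k, m) / 2\<^sup>k\<close> yields the formula.\<close>

section \<open>Gambler's ruin and a binomial recurrence\<close>

text \<open>For the walk on \<open>{0..A}\<close> started at 1 that steps towards 0 with probability \<open>p\<close>, this is
  the probability of reaching 0 before \<open>A\<close>, where \<open>lam = p / (1 - p)\<close>.\<close>

definition ruin_prob :: "real \<Rightarrow> nat \<Rightarrow> real" where
  "ruin_prob lam A = 1 - (lam - 1) / (lam ^ A - 1)"

lemma ruin_prob_harmonic:
  fixes h :: "nat \<Rightarrow> real"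
  assumes p: "0 < p" "p < 1" "p \<noteq> 1/2" and A: "1 \<le> A"
    and harmonic: "\<And>y. 0 < y \<Longrightarrow> y < A \<Longrightarrow> h y = p * h (y - 1) + (1 - p) * h (y + 1)"
    and absorbed: "h A = 0"
  shows "h 1 = h 0 * ruin_prob (p / (1 - p)) A"
proof -
  define lam where "lam = p / (1 - p)"
  have lam: "0 < lam" "lam \<noteq> 1" using p by (auto simp: lam_def field_simps)
  define d where "d y = h (Suc y) - h y" for y
  have d_Suc: "d (Suc y) = lam * d y" if "Suc y < A" for y
  proof -
    have "(1 - p) * d (Suc y) = p * d y"
      using harmonic[of "Suc y"] that by (simp add: d_def algebra_simps)
    then show ?thesis using p unfolding lam_def by (simp add: field_simps)
  qed
  have d_pow: "y < A \<Longrightarrow> d y = lam ^ y * d 0" for y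
    by (induction y) (simp_all add: d_Suc)
  have "- h 0 = (\<Sum>y<A. d y)"
    unfolding d_def sum_lessThan_telescope absorbed by simp
  also have "\<dots> = (\<Sum>y<A. lam ^ y * d 0)"
    by (intro sum.cong refl d_pow) simp
  also have "\<dots> = (\<Sum>y<A. lam ^ y) * d 0"
    by (rule sum_distrib_right[symmetric])
  also have "(\<Sum>y<A. lam ^ y) = (lam ^ A - 1) / (lam - 1)"
    using lam by (simp add: sum_gp_strict field_simps)
  finally have "- h 0 = (lam ^ A - 1) / (lam - 1) * d 0" .
  moreover have "lam ^ A \<noteq> 1"
    using lam A power_eq_1_iff[of lam A] by auto
  ultimately have "d 0 = - h 0 * (lam - 1) / (lam ^ A - 1)"
    using lam by (simp add: field_simps)
  then show ?thesis
    by (simp add: d_def ruin_prob_def lam_def[symmetric] algebra_simps diff_divide_distrib)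
qed

lemma ruin_prob_bounds:
  assumes "1 < lam" "0 < A"
  shows "0 \<le> ruin_prob lam A" "ruin_prob lam A \<le> 1"
proof -
  have "lam - 1 \<le> lam ^ A - 1"
    using power_increasing[of 1 A lam] assms by simp
  then show "0 \<le> ruin_prob lam A" "ruin_prob lam A \<le> 1"
    using assms by (auto simp: ruin_prob_def)
qed

lemma ruin_prob_tendsto_1:
  assumes "1 < lam"
  shows "(\<lambda>A. ruin_prob lam (Suc A)) \<longlonglongrightarrow> 1"
proof -
  have "filterlim (\<lambda>A. lam ^ A) at_infinity sequentially"
    using assms by (intro filterlim_realpow_sequentially_gt1) simp
  then have "filterlim (\<lambda>A. lam ^ Suc A) at_infinity sequentially"
    by (simp only: filterlim_sequentially_Suc)
  then have "filterlim (\<lambda>A. (-1) + lam ^ Suc A) at_infinity sequentially"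
    by (rule tendsto_add_filterlim_at_infinity[OF tendsto_const])
  then have "(\<lambda>A. (lam - 1) / ((-1) + lam ^ Suc A)) \<longlonglongrightarrow> 0"
    by (rule tendsto_divide_0[OF tendsto_const])
  then show ?thesis
    unfolding ruin_prob_def using tendsto_diff[OF tendsto_const] by fastforce
qed

lemma summable_power_ruin_prob:
  assumes "0 \<le> X" "X < 1" "1 < lam"
  shows "summable (\<lambda>a. X ^ Suc a * ruin_prob lam (Suc a) ^ j)"
proof (rule summable_comparison_test')
  show "summable (\<lambda>a. X * X ^ a)"
    using assms by (intro summable_mult summable_geometric) simp
  show "norm (X ^ Suc a * ruin_prob lam (Suc a) ^ j) \<le> X * X ^ a" for a
    using ruin_prob_bounds[OF assms(3), of "Suc a"] assms
    by (auto simp: abs_mult intro!: mult_left_le power_le_one)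
qed

lemma binomial_recurrence_solution:
  fixes f :: "nat \<Rightarrow> nat \<Rightarrow> 'a::comm_semiring_1"
  assumes f_0: "\<And>c. f 0 c = of_bool (c = m)"
    and f_Suc: "\<And>j c. f (Suc j) c = \<alpha> * f j (Suc c) + \<beta> * f j c"
  shows "f j c = (if c \<le> m then of_nat (j choose (m - c)) * \<alpha> ^ (m - c) * \<beta> ^ (j - (m - c)) else 0)"
proof (induction j arbitrary: c)
  case 0
  show ?case by (cases "c = m") (simp_all add: f_0 binomial_eq_0)
next
  case (Suc j)
  consider "m < c" | "c = m" | d where "m - c = Suc d" "m - Suc c = d"
    by (metis Suc_diff_Suc nat_neq_iff)
  then show ?case
  proof cases
    case 3
    then have "c < m" by simp
    then have IH: "f j (Suc c) = of_nat (j choose d) * \<alpha> ^ d * \<beta> ^ (j - d)"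
        "f j c = of_nat (j choose Suc d) * \<alpha> ^ Suc d * \<beta> ^ (j - Suc d)"
      using 3 Suc.IH[of "Suc c"] Suc.IH[of c] by simp_all
    have "\<alpha> * (of_nat (j choose d) * \<alpha> ^ d * \<beta> ^ (j - d))
        + \<beta> * (of_nat (j choose Suc d) * \<alpha> ^ Suc d * \<beta> ^ (j - Suc d))
        = of_nat (Suc j choose Suc d) * \<alpha> ^ Suc d * \<beta> ^ (Suc j - Suc d)"
    proof (cases "Suc d \<le> j")
      case True
      then have "\<beta> ^ (j - d) = \<beta> * \<beta> ^ (j - Suc d)"
        by (metis Suc_diff_le diff_Suc_Suc power_Suc)
      then show ?thesis by (simp add: algebra_simps)
    next
      case False
      then show ?thesis by (cases "d = j") (auto simp: binomial_eq_0)
    qed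
    then show ?thesis using 3 \<open>c < m\<close> by (simp add: f_Suc IH)
  qed (use Suc.IH in \<open>auto simp: f_Suc\<close>)
qed

lemma sums_power_tail:
  fixes X :: real
  assumes "0 \<le> X" "X < 1"
  shows "(\<lambda>a. of_bool (H \<le> a) * X ^ Suc a) sums (X ^ Suc H / (1 - X))"
proof -
  have "(\<lambda>i. X ^ Suc H * X ^ i) sums (X ^ Suc H * (1 / (1 - X)))"
    using assms by (intro sums_mult geometric_sums) simp
  then have "(\<lambda>i. of_bool (H \<le> i + H) * X ^ Suc (i + H)) sums (X ^ Suc H / (1 - X))"
    by (simp add: power_add mult_ac)
  then show ?thesis
    by (subst (asm) sums_iff_shift) simp
qed

lemma suminf_suminf_ennreal_mult:
  fixes u v :: "nat \<Rightarrow> real"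
  assumes "\<And>a. 0 \<le> u a" "\<And>b. 0 \<le> v b" "summable u" "summable v"
  shows "(\<Sum>a. \<Sum>b. ennreal (u a * v b)) = ennreal (suminf u * suminf v)"
proof -
  have "(\<Sum>a. \<Sum>b. ennreal (u a * v b)) = (\<Sum>a. ennreal (u a) * ennreal (suminf v))"
    using assms by (simp add: ennreal_mult suminf_ennreal2)
  also have "\<dots> = ennreal (suminf u) * ennreal (suminf v)"
    using assms by (simp add: suminf_ennreal2)
  finally show ?thesis
    using assms by (simp add: ennreal_mult suminf_nonneg)
qed

lemma power_eq_double_tail_suminf:
  fixes X :: real
  assumes "0 < X" "X < 1"
  shows "ennreal (X ^ (H + L + 1)) = ennreal ((1 - X)\<^sup>2 / X) *
    (\<Sum>a. \<Sum>b. ennreal (X ^ Suc a * X ^ Suc b) * of_bool (H \<le> a \<and> L \<le> b))"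
proof -
  have tail: "(\<lambda>a. of_bool (N \<le> a) * X ^ Suc a) sums (X ^ Suc N / (1 - X))" for N
    using assms by (intro sums_power_tail) auto
  have "(\<Sum>a. \<Sum>b. ennreal (X ^ Suc a * X ^ Suc b) * of_bool (H \<le> a \<and> L \<le> b))
      = (\<Sum>a. \<Sum>b. ennreal (of_bool (H \<le> a) * X ^ Suc a * (of_bool (L \<le> b) * X ^ Suc b)))"
    by (intro suminf_cong) auto
  also have "\<dots> = ennreal (X ^ Suc H / (1 - X) * (X ^ Suc L / (1 - X)))"
    using assms tail[of H] tail[of L]
    by (subst suminf_suminf_ennreal_mult) (auto simp: sums_iff)
  finally have "(\<Sum>a. \<Sum>b. ennreal (X ^ Suc a * X ^ Suc b) * of_bool (H \<le> a \<and> L \<le> b))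
      = ennreal (X ^ Suc H / (1 - X) * (X ^ Suc L / (1 - X)))" .
  moreover have "u\<^sup>2 / X * (X * a / u * (X * b / u)) = X * (a * b)" if "u \<noteq> 0" for u a b
    using that assms by (simp add: field_simps power2_eq_square)
  then have "(1 - X)\<^sup>2 / X * (X ^ Suc H / (1 - X) * (X ^ Suc L / (1 - X))) = X ^ (H + L + 1)"
    using assms by (simp add: power_add)
  ultimately show ?thesis
    using assms by (simp add: ennreal_mult[symmetric])
qed

lemma SUP_suminf_suminf_ennreal:
  fixes f :: "nat \<Rightarrow> nat \<Rightarrow> nat \<Rightarrow> ennreal"
  assumes "\<And>a b. incseq (\<lambda>n. f n a b)"
  shows "(SUP n. \<Sum>a. \<Sum>b. f n a b) = (\<Sum>a. \<Sum>b. SUP n. f n a b)"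
proof -
  have "incseq (\<lambda>n. \<Sum>b. f n a b)" for a
    using assms by (auto simp: incseq_def intro!: suminf_le)
  then show ?thesis
    using assms by (simp add: ennreal_suminf_SUP_eq)
qed

section \<open>Events determined by finite prefixes of an i.i.d. stream\<close>

definition exists_prefix :: "('a list \<Rightarrow> bool) \<Rightarrow> 'a stream set" where
  "exists_prefix Q = {\<omega>. \<exists>n. Q (stake n \<omega>)}"

lemma space_stream_space_pmf [simp]: "space (stream_space (measure_pmf P)) = UNIV"
  by (simp add: space_stream_space)

lemma measurable_stake_pmf:
  fixes P :: "'a::countable pmf"
  assumes "\<And>xs. g xs \<in> space N"
  shows "(\<lambda>\<omega>. g (stake n \<omega>)) \<in> stream_space (measure_pmf P) \<rightarrow>\<^sub>M N"
proof -
  have sets_eq: "sets (stream_space (measure_pmf P)) = sets (stream_space (count_space UNIV))"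
    by (rule sets_stream_space_cong) simp
  have "stake n \<in> stream_space (measure_pmf P) \<rightarrow>\<^sub>M count_space UNIV"
    using measurable_stake by (subst measurable_cong_sets[OF sets_eq refl])
  then show ?thesis
    by (rule measurable_compose) (simp add: assms)
qed

lemma sets_stake_pmf: "{\<omega>. Q (stake n \<omega>)} \<in> sets (stream_space (measure_pmf P))"
  for P :: "'a::countable pmf"
  using predE[OF measurable_stake_pmf[of Q "count_space UNIV"]] by simp

lemma sets_exists_prefix: "exists_prefix Q \<in> sets (stream_space (measure_pmf P))"
  for P :: "'a::countable pmf"
proof -
  have "exists_prefix Q = (\<Union>n. {\<omega>. Q (stake n \<omega>)})"
    by (auto simp: exists_prefix_def)
  also have "\<dots> \<in> sets (stream_space (measure_pmf P))"
    by (intro sets.countable_UN'') (simp_all add: sets_stake_pmf)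
  finally show ?thesis .
qed

lemma stake_prefix: "n1 \<le> n2 \<Longrightarrow> \<exists>ys. stake n2 \<omega> = stake n1 \<omega> @ ys"
  by (metis le_add_diff_inverse stake_add)

lemma incseq_stake_sets:
  assumes "\<And>xs ys. Q xs \<Longrightarrow> Q (xs @ ys)"
  shows "incseq (\<lambda>n. {\<omega>. Q (stake n \<omega>)})"
proof (intro monoI subsetI)
  fix n1 n2 :: nat and \<omega> assume "n1 \<le> n2" "\<omega> \<in> {\<omega>. Q (stake n1 \<omega>)}"
  then show "\<omega> \<in> {\<omega>. Q (stake n2 \<omega>)}"
    using stake_prefix[of n1 n2 \<omega>] assms by auto
qed

lemma exists_prefix_mono: "(\<And>xs. Q xs \<Longrightarrow> R xs) \<Longrightarrow> exists_prefix Q \<subseteq> exists_prefix R"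
  by (auto simp: exists_prefix_def)

lemma emeasure_exists_prefix:
  fixes P :: "'a::countable pmf"
  assumes "\<And>xs ys. Q xs \<Longrightarrow> Q (xs @ ys)"
  shows "emeasure (stream_space (measure_pmf P)) (exists_prefix Q)
    = (SUP n. emeasure (stream_space (measure_pmf P)) {\<omega>. Q (stake n \<omega>)})"
proof -
  have "incseq (\<lambda>n. {\<omega>. Q (stake n \<omega>)})"
    using assms by (rule incseq_stake_sets)
  moreover have "exists_prefix Q = (\<Union>n. {\<omega>. Q (stake n \<omega>)})"
    by (auto simp: exists_prefix_def)
  ultimately show ?thesis
    using sets_stake_pmf by (subst SUP_emeasure_incseq) auto
qed

lemma nn_integral_stake_Suc:
  fixes P :: "'a::finite pmf"
  shows "(\<integral>\<^sup>+\<omega>. g (stake (Suc n) \<omega>) \<partial>stream_space (measure_pmf P))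
    = (\<Sum>t\<in>UNIV. ennreal (pmf P t) * (\<integral>\<^sup>+\<omega>. g (t # stake n \<omega>) \<partial>stream_space (measure_pmf P)))"
proof -
  have "(\<integral>\<^sup>+\<omega>. g (stake (Suc n) \<omega>) \<partial>stream_space (measure_pmf P))
      = (\<integral>\<^sup>+t. (\<integral>\<^sup>+\<omega>. g (stake (Suc n) (t ## \<omega>)) \<partial>stream_space (measure_pmf P)) \<partial>measure_pmf P)"
    by (rule prob_space.nn_integral_stream_space[OF prob_space_measure_pmf])
      (rule measurable_stake_pmf, simp)
  then show ?thesis
    by (simp add: nn_integral_measure_pmf nn_integral_count_space_finite mult.commute)
qed

lemma emeasure_stream_space_pmf:
  fixes P :: "'a::finite pmf"
  assumes "A \<in> sets (stream_space (measure_pmf P))"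
  shows "emeasure (stream_space (measure_pmf P)) A
    = (\<Sum>t\<in>UNIV. ennreal (pmf P t) * emeasure (stream_space (measure_pmf P)) {\<omega>. t ## \<omega> \<in> A})"
proof -
  have "emeasure (stream_space (measure_pmf P)) A
      = (\<integral>\<^sup>+t. emeasure (stream_space (measure_pmf P)) {\<omega>. t ## \<omega> \<in> A} \<partial>measure_pmf P)"
    using prob_space.emeasure_stream_space[OF prob_space_measure_pmf assms] by simp
  then show ?thesis
    by (simp add: nn_integral_measure_pmf nn_integral_count_space_finite mult.commute)
qed

lemma nn_integral_sum_stake:
  fixes P :: "'a::countable pmf"
  assumes "finite I" "\<And>i. 0 \<le> c i" "\<And>i xs. 0 \<le> g i xs"
  shows "(\<Sum>i\<in>I. ennreal (c i) * (\<integral>\<^sup>+\<omega>. ennreal (g i (stake n \<omega>)) \<partial>stream_space (measure_pmf P)))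
    = (\<integral>\<^sup>+\<omega>. ennreal (\<Sum>i\<in>I. c i * g i (stake n \<omega>)) \<partial>stream_space (measure_pmf P))"
proof -
  have "(\<integral>\<^sup>+\<omega>. ennreal (\<Sum>i\<in>I. c i * g i (stake n \<omega>)) \<partial>stream_space (measure_pmf P))
      = (\<integral>\<^sup>+\<omega>. (\<Sum>i\<in>I. ennreal (c i) * ennreal (g i (stake n \<omega>))) \<partial>stream_space (measure_pmf P))"
    using assms by (simp add: ennreal_mult sum_ennreal[symmetric])
  also have "\<dots> = (\<Sum>i\<in>I. ennreal (c i) * (\<integral>\<^sup>+\<omega>. ennreal (g i (stake n \<omega>)) \<partial>stream_space (measure_pmf P)))"
    using assms by (simp add: nn_integral_sum nn_integral_cmult measurable_stake_pmf)
  finally show ?thesis ..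
qed

lemma nn_integral_of_bool_stake:
  fixes P :: "'a::countable pmf"
  shows "(\<integral>\<^sup>+\<omega>. of_bool (Q (stake n \<omega>)) \<partial>stream_space (measure_pmf P))
    = emeasure (stream_space (measure_pmf P)) {\<omega>. Q (stake n \<omega>)}"
proof -
  have "(\<lambda>\<omega>. of_bool (Q (stake n \<omega>)) :: ennreal) = indicator {\<omega>. Q (stake n \<omega>)}"
    by (auto simp: indicator_def)
  then show ?thesis
    using nn_integral_indicator[OF sets_stake_pmf[of Q n P]] by simp
qed

lemma nn_integral_suminf_suminf_stake:
  fixes P :: "'a::countable pmf" and f :: "nat \<Rightarrow> nat \<Rightarrow> 'a list \<Rightarrow> ennreal"
  shows "(\<integral>\<^sup>+\<omega>. (\<Sum>a. \<Sum>b. f a b (stake n \<omega>)) \<partial>stream_space (measure_pmf P))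
    = (\<Sum>a. \<Sum>b. \<integral>\<^sup>+\<omega>. f a b (stake n \<omega>) \<partial>stream_space (measure_pmf P))"
proof -
  have "(\<lambda>\<omega>. \<Sum>b. f a b (stake n \<omega>)) \<in> borel_measurable (stream_space (measure_pmf P))" for a
    by (rule measurable_stake_pmf) simp
  moreover have "(\<lambda>\<omega>. f a b (stake n \<omega>)) \<in> borel_measurable (stream_space (measure_pmf P))" for a b
    by (rule measurable_stake_pmf) simp
  ultimately show ?thesis
    by (simp add: nn_integral_suminf)
qed

lemma nn_integral_suminf_suminf_of_bool_stake:
  fixes P :: "'a::countable pmf"
  shows "(\<integral>\<^sup>+\<omega>. (\<Sum>a. \<Sum>b. c a b * of_bool (Q a b (stake n \<omega>))) \<partial>stream_space (measure_pmf P))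
    = (\<Sum>a. \<Sum>b. c a b * emeasure (stream_space (measure_pmf P)) {\<omega>. Q a b (stake n \<omega>)})"
proof -
  have "(\<integral>\<^sup>+\<omega>. c a b * of_bool (Q a b (stake n \<omega>)) \<partial>stream_space (measure_pmf P))
      = c a b * emeasure (stream_space (measure_pmf P)) {\<omega>. Q a b (stake n \<omega>)}" for a b
    by (subst nn_integral_cmult) (rule measurable_stake_pmf, simp_all add: nn_integral_of_bool_stake)
  then show ?thesis
    using nn_integral_suminf_suminf_stake[where f="\<lambda>a b xs. c a b * of_bool (Q a b xs)"] by simp
qed

section \<open>The walk stopped at its \<open>k\<close>-th return\<close>

type_synonym 'f innov = "(bool \<times> bool) \<times> ('f \<times> 'f)"

text \<open>A state \<open>(x, j, c)\<close>: position \<open>x\<close>, number \<open>j\<close> of returns to 0 still to come, and number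
  \<open>c\<close> of excursions so far that started upwards. The state is frozen once \<open>j = 0\<close>, so running
  it on any long enough prefix of the innovations gives the state at time \<open>\<rho>\<^sub>k\<close>.\<close>

type_synonym wstate = "int \<times> nat \<times> nat"

abbreviation returns_left :: "wstate \<Rightarrow> nat" where
  "returns_left w \<equiv> fst (snd w)"

abbreviation up_count :: "wstate \<Rightarrow> nat" where
  "up_count w \<equiv> snd (snd w)"

definition walk_next :: "wstate \<Rightarrow> bool \<times> bool \<Rightarrow> wstate" where
  "walk_next w c = (case w of (x, j, u) \<Rightarrow>
     if j = 0 then w
     else let x' = walk_step x c in
       (x', if x' = 0 then j - 1 else j, if x = 0 \<and> 0 < x' then Suc u else u))"

definition walk_run :: "wstate \<Rightarrow> 'f innov list \<Rightarrow> wstate" where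
  "walk_run w xs = foldl walk_next w (map fst xs)"

definition lamp_next :: "(int \<Rightarrow> 'f) \<times> wstate \<Rightarrow> 'f innov \<Rightarrow> (int \<Rightarrow> 'f) \<times> wstate" where
  "lamp_next s t = (case s of (L, w) \<Rightarrow>
     if returns_left w = 0 then s
     else let w' = walk_next w (fst t) in ((L(fst w := fst (snd t)))(fst w' := snd (snd t)), w'))"

definition lamp_run :: "(int \<Rightarrow> 'f) \<times> wstate \<Rightarrow> 'f innov list \<Rightarrow> (int \<Rightarrow> 'f) \<times> wstate" where
  "lamp_run s xs = foldl lamp_next s xs"

fun visited :: "wstate \<Rightarrow> 'f innov list \<Rightarrow> int set" where
  "visited w [] = {fst w}"
| "visited w (t # xs) =
     (if returns_left w = 0 then {fst w} else insert (fst w) (visited (walk_next w (fst t)) xs))"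

lemma walk_run_simps [simp]:
  "walk_run w [] = w"
  "walk_run w (t # xs) = walk_run (walk_next w (fst t)) xs"
  "walk_run w (xs @ ys) = walk_run (walk_run w xs) ys"
  by (simp_all add: walk_run_def)

lemma lamp_run_simps [simp]:
  "lamp_run s [] = s"
  "lamp_run s (t # xs) = lamp_run (lamp_next s t) xs"
  "lamp_run s (xs @ ys) = lamp_run (lamp_run s xs) ys"
  by (simp_all add: lamp_run_def)

lemma walk_next_frozen [simp]: "returns_left w = 0 \<Longrightarrow> walk_next w c = w"
  by (cases w) (simp add: walk_next_def)

lemma lamp_next_frozen [simp]: "returns_left (snd s) = 0 \<Longrightarrow> lamp_next s t = s"
  by (cases s) (simp add: lamp_next_def)

lemma lamp_next_active:
  "0 < returns_left w \<Longrightarrow> lamp_next (L, w) t =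
     ((L(fst w := fst (snd t)))(fst (walk_next w (fst t)) := snd (snd t)), walk_next w (fst t))"
  by (simp add: lamp_next_def Let_def)

lemma walk_run_frozen: "returns_left w = 0 \<Longrightarrow> walk_run w xs = w"
  by (induction xs) auto

lemma lamp_run_frozen: "returns_left (snd s) = 0 \<Longrightarrow> lamp_run s xs = s"
  by (induction xs) auto

lemma snd_lamp_run: "snd (lamp_run s xs) = walk_run (snd s) xs"
  by (induction xs arbitrary: s) (auto simp: lamp_next_def Let_def split: prod.splits)

lemma walk_run_stake_Suc: "walk_run w (stake (Suc n) \<omega>) = walk_next (walk_run w (stake n \<omega>)) (fst (\<omega> !! n))"
  unfolding stake_Suc by simp

lemma lamp_run_stake_Suc: "lamp_run s (stake (Suc n) \<omega>) = lamp_next (lamp_run s (stake n \<omega>)) (\<omega> !! n)"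
  unfolding stake_Suc by simp

lemma fst_walk_next: "0 < returns_left w \<Longrightarrow> fst (walk_next w c) = walk_step (fst w) c"
  by (cases w) (auto simp: walk_next_def Let_def)

lemma walk_step_dist: "\<bar>walk_step x c - x\<bar> = 1"
  by (auto simp: walk_step_def)

lemma fst_walk_run_finished:
  assumes "returns_left w = 0 \<longrightarrow> fst w = 0" and "returns_left (walk_run w xs) = 0"
  shows "fst (walk_run w xs) = 0"
  using assms
proof (induction xs arbitrary: w)
  case (Cons t xs)
  have "returns_left (walk_next w (fst t)) = 0 \<longrightarrow> fst (walk_next w (fst t)) = 0"
    using Cons.prems(1) by (cases w) (auto simp: walk_next_def Let_def)
  then show ?case using Cons by simp
qed simp

lemma visited_frozen: "returns_left w = 0 \<Longrightarrow> visited w xs = {fst w}"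
  by (cases xs) auto

lemma fst_in_visited: "fst w \<in> visited w xs"
  by (cases xs) auto

lemma visited_interval: "\<exists>l h. visited w xs = {l..h} \<and> l \<le> fst w \<and> fst w \<le> h"
proof (induction xs arbitrary: w)
  case Nil
  show ?case by (intro exI[of _ "fst w"]) simp
next
  case (Cons t xs)
  show ?case
  proof (cases "returns_left w = 0")
    case True
    then show ?thesis by (intro exI[of _ "fst w"]) simp
  next
    case False
    obtain l h where lh: "visited (walk_next w (fst t)) xs = {l..h}"
      "l \<le> fst (walk_next w (fst t))" "fst (walk_next w (fst t)) \<le> h"
      using Cons.IH by blast
    have "\<bar>fst (walk_next w (fst t)) - fst w\<bar> = 1"
      using False by (simp add: fst_walk_next walk_step_dist)
    then have "insert (fst w) {l..h} = {min l (fst w)..max h (fst w)}"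
      using lh by (auto simp: abs_if split: if_splits)
    then show ?thesis
      using False lh by (intro exI[of _ "min l (fst w)"] exI[of _ "max h (fst w)"]) auto
  qed
qed

lemma finite_visited [simp]: "finite (visited w xs)"
  using visited_interval[of w xs] by auto

lemma visited_append_frozen:
  "returns_left (walk_run w xs) = 0 \<Longrightarrow> visited w (xs @ ys) = visited w xs"
  by (induction xs arbitrary: w) (auto simp: visited_frozen)

lemma rho_Suc_eqI:
  assumes "rho \<omega> i \<le> n" "\<forall>t. rho \<omega> i < t \<and> t \<le> n \<longrightarrow> lpos \<omega> t \<noteq> 0" "lpos \<omega> (Suc n) = 0"
  shows "rho \<omega> (Suc i) = Suc n"
  unfolding rho.simps
proof (rule Least_equality)
  show "\<And>t. rho \<omega> i < t \<and> lpos \<omega> t = 0 \<Longrightarrow> Suc n \<le> t"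
    using assms(2) by (meson not_less_eq_eq)
qed (use assms in auto)

lemma Nplus_Suc: "Nplus \<omega> (Suc i) = Nplus \<omega> i + of_bool (0 < lpos \<omega> (rho \<omega> i + 1))"
proof -
  have "{j \<in> {1..Suc i}. 0 < lpos \<omega> (rho \<omega> (j - 1) + 1)} =
      (if 0 < lpos \<omega> (rho \<omega> i + 1) then insert (Suc i) else id) {j \<in> {1..i}. 0 < lpos \<omega> (rho \<omega> (j - 1) + 1)}"
    by (auto simp: atLeastAtMostSuc_conv)
  then show ?thesis unfolding Nplus_def by simp
qed

text \<open>The invariant at time \<open>n\<close>: \<open>i = k - returns_left w\<close> returns have been made, the last one
  at time \<open>rho \<omega> i\<close>, and \<open>up_count w\<close> also counts the current excursion if it started
  upwards.\<close>

definition tracks :: "((bool \<times> bool) \<times> ('f \<times> 'f)) stream \<Rightarrow> nat \<Rightarrow> nat \<Rightarrow> wstate \<Rightarrow> bool" where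
  "tracks \<omega> k n w \<longleftrightarrow> fst w = lpos \<omega> n \<and> returns_left w \<le> k \<and>
     (let i = k - returns_left w in
        rho \<omega> i \<le> n \<and> lpos \<omega> (rho \<omega> i) = 0 \<and> (\<forall>t. rho \<omega> i < t \<and> t \<le> n \<longrightarrow> lpos \<omega> t \<noteq> 0) \<and>
        up_count w = Nplus \<omega> i + of_bool (rho \<omega> i < n \<and> 0 < lpos \<omega> (rho \<omega> i + 1)))"

lemma tracks_walk_next:
  assumes tr: "tracks \<omega> k n w" and active: "0 < returns_left w"
  shows "tracks \<omega> k (Suc n) (walk_next w (fst (\<omega> !! n)))"
proof -
  obtain x j c where w: "w = (x, j, c)" by (cases w)
  define i where "i = k - j"
  define x' where "x' = lpos \<omega> (Suc n)"
  have x: "x = lpos \<omega> n" and "j \<le> k" and last: "rho \<omega> i \<le> n" "lpos \<omega> (rho \<omega> i) = 0"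
    and no_zero: "\<forall>t. rho \<omega> i < t \<and> t \<le> n \<longrightarrow> lpos \<omega> t \<noteq> 0"
    and c: "c = Nplus \<omega> i + of_bool (rho \<omega> i < n \<and> 0 < lpos \<omega> (rho \<omega> i + 1))"
    using tr by (auto simp: tracks_def w i_def Let_def)
  have next_w: "walk_next w (fst (\<omega> !! n)) = (x', if x' = 0 then j - 1 else j, if x = 0 \<and> 0 < x' then Suc c else c)"
    using active by (simp add: w walk_next_def Let_def x x'_def)
  have x_zero: "x = 0 \<longleftrightarrow> rho \<omega> i = n"
    using last no_zero x by (metis le_neq_implies_less order_refl)
  show ?thesis
  proof (cases "x' = 0")
    case True
    have "k - (j - 1) = Suc i" using active \<open>j \<le> k\<close> by (simp add: w i_def)
    moreover have "rho \<omega> (Suc i) = Suc n"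
      using last no_zero True by (intro rho_Suc_eqI) (auto simp: x'_def)
    moreover have "c = Nplus \<omega> (Suc i)"
      using c last True x_zero by (cases "rho \<omega> i < n") (auto simp: Nplus_Suc x'_def)
    ultimately show ?thesis
      using True \<open>j \<le> k\<close> by (simp add: tracks_def next_w x'_def)
  next
    case False
    have "(if x = 0 \<and> 0 < x' then Suc c else c) =
        Nplus \<omega> i + of_bool (rho \<omega> i < Suc n \<and> 0 < lpos \<omega> (rho \<omega> i + 1))"
      using c last x_zero by (cases "rho \<omega> i = n") (auto simp: x'_def)
    moreover have "\<forall>t. rho \<omega> i < t \<and> t \<le> Suc n \<longrightarrow> lpos \<omega> t \<noteq> 0"
      using no_zero False le_Suc_eq by (auto simp: x'_def)
    ultimately show ?thesis
      using False \<open>j \<le> k\<close> last by (simp add: tracks_def next_w x'_def i_def Let_def)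
  qed
qed

lemma walk_run_tracks:
  "(\<forall>t<n. 0 < returns_left (walk_run (0, k, 0) (stake t \<omega>))) \<Longrightarrow> tracks \<omega> k n (walk_run (0, k, 0) (stake n \<omega>))"
proof (induction n)
  case 0
  then show ?case by (simp add: tracks_def Nplus_def)
next
  case (Suc n)
  then show ?case
    unfolding walk_run_stake_Suc by (simp add: tracks_walk_next)
qed

lemma lamp_run_lamps:
  "(\<forall>t<n. 0 < returns_left (walk_run (0, k, 0) (stake t \<omega>))) \<Longrightarrow>
    fst (lamp_run ((\<lambda>i. 0), (0, k, 0)) (stake n \<omega>)) = lamps \<omega> n"
proof (induction n)
  case (Suc n)
  define w where "w = walk_run (0, k, 0) (stake n \<omega>)"
  have "0 < returns_left w" using Suc.prems by (simp add: w_def)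
  moreover have "fst w = lpos \<omega> n"
    using walk_run_tracks[of n k \<omega>] Suc.prems by (simp add: w_def tracks_def)
  moreover have "snd (lamp_run ((\<lambda>i. 0), (0, k, 0)) (stake n \<omega>)) = w"
    by (simp add: w_def snd_lamp_run)
  ultimately show ?case
    using Suc unfolding lamp_run_stake_Suc
    by (cases "lamp_run ((\<lambda>i. 0), (0, k, 0)) (stake n \<omega>)") (simp add: lamp_next_active fst_walk_next)
qed simp

lemma walk_run_finished:
  assumes finished: "returns_left (walk_run (0, k, 0) (stake n \<omega>)) = 0"
  shows "Nplus \<omega> k = up_count (walk_run (0, k, 0) (stake n \<omega>))"
    and "lstate \<omega> (rho \<omega> k) = (fst (lamp_run ((\<lambda>i. 0), (0, k, 0)) (stake n \<omega>)), 0)"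
proof -
  define \<tau> where "\<tau> = (LEAST t. returns_left (walk_run (0, k, 0) (stake t \<omega>)) = 0)"
  have \<tau>: "returns_left (walk_run (0, k, 0) (stake \<tau> \<omega>)) = 0" "\<tau> \<le> n"
    using finished unfolding \<tau>_def by (auto intro: LeastI Least_le)
  have before: "\<forall>t<\<tau>. 0 < returns_left (walk_run (0, k, 0) (stake t \<omega>))"
    unfolding \<tau>_def using not_less_Least by blast
  have tr: "tracks \<omega> k \<tau> (walk_run (0, k, 0) (stake \<tau> \<omega>))"
    using walk_run_tracks before by blast
  have at_0: "fst (walk_run (0, k, 0) (stake \<tau> \<omega>)) = 0"
    using fst_walk_run_finished[OF _ \<tau>(1)] by simp
  then have "rho \<omega> k = \<tau>"
    using tr \<tau>(1) by (simp add: tracks_def) (metis le_neq_implies_less order_refl)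
  moreover obtain ys where "stake n \<omega> = stake \<tau> \<omega> @ ys"
    using stake_prefix \<tau>(2) by blast
  ultimately show "Nplus \<omega> k = up_count (walk_run (0, k, 0) (stake n \<omega>))"
    and "lstate \<omega> (rho \<omega> k) = (fst (lamp_run ((\<lambda>i. 0), (0, k, 0)) (stake n \<omega>)), 0)"
    using tr \<tau>(1) lamp_run_lamps[OF before] at_0
    by (simp_all add: tracks_def walk_run_frozen lamp_run_frozen snd_lamp_run lstate_def)
qed

definition finish_with :: "nat \<Rightarrow> wstate \<Rightarrow> 'f innov list \<Rightarrow> bool" where
  "finish_with m w xs \<longleftrightarrow> returns_left (walk_run w xs) = 0 \<and> up_count (walk_run w xs) = m"

definition dark_finish :: "nat \<Rightarrow> (int \<Rightarrow> 'f::zero) \<Rightarrow> wstate \<Rightarrow> 'f innov list \<Rightarrow> bool" where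
  "dark_finish m L w xs \<longleftrightarrow> finish_with m w xs \<and> fst (lamp_run (L, w) xs) = (\<lambda>i. 0)"

definition confined_finish :: "nat \<Rightarrow> nat \<Rightarrow> nat \<Rightarrow> wstate \<Rightarrow> 'f innov list \<Rightarrow> bool" where
  "confined_finish A B m w xs \<longleftrightarrow> finish_with m w xs \<and> visited w xs \<subseteq> {- int B<..<int A}"

lemma finish_with_append: "finish_with m w xs \<Longrightarrow> finish_with m w (xs @ ys)"
  by (auto simp: finish_with_def walk_run_frozen)

lemma dark_finish_append: "dark_finish m L w xs \<Longrightarrow> dark_finish m L w (xs @ ys)"
  by (auto simp: dark_finish_def finish_with_def walk_run_frozen lamp_run_frozen snd_lamp_run)

lemma confined_finish_append: "confined_finish A B m w xs \<Longrightarrow> confined_finish A B m w (xs @ ys)"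
  by (auto simp: confined_finish_def finish_with_def walk_run_frozen visited_append_frozen)

lemma dark_finish_Cons:
  "0 < returns_left w \<Longrightarrow> dark_finish m L w (t # xs) \<longleftrightarrow>
     dark_finish m ((L(fst w := fst (snd t)))(fst (walk_next w (fst t)) := snd (snd t))) (walk_next w (fst t)) xs"
  by (simp add: dark_finish_def finish_with_def lamp_next_active)

lemma dark_finish_frozen:
  "returns_left w = 0 \<Longrightarrow> dark_finish m L w xs \<longleftrightarrow> up_count w = m \<and> L = (\<lambda>i. 0)"
  by (simp add: dark_finish_def finish_with_def walk_run_frozen lamp_run_frozen)

lemma confined_finish_Cons:
  "0 < returns_left w \<Longrightarrow> confined_finish A B m w (t # xs) \<longleftrightarrow>
     fst w \<in> {- int B<..<int A} \<and> confined_finish A B m (walk_next w (fst t)) xs"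
  by (auto simp: confined_finish_def finish_with_def)

lemma confined_finish_mono:
  "confined_finish A B m w xs \<Longrightarrow> A \<le> A' \<Longrightarrow> B \<le> B' \<Longrightarrow> confined_finish A' B' m w xs"
  by (fastforce simp: confined_finish_def)

lemma finish_with_unique:
  assumes "finish_with a w (stake n1 \<omega>)" "finish_with b w (stake n2 \<omega>)"
  shows "a = b"
  using assms stake_prefix[of n1 n2 \<omega>] stake_prefix[of n2 n1 \<omega>]
  by (cases "n1 \<le> n2") (auto dest: finish_with_append simp: finish_with_def walk_run_frozen)

lemma exists_prefix_confined_outside:
  "fst w \<notin> {- int B<..<int A} \<Longrightarrow> exists_prefix (confined_finish A B m w) = {}"
  using fst_in_visited by (fastforce simp: exists_prefix_def confined_finish_def)

lemma exists_prefix_confined_frozen: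
  "returns_left w = 0 \<Longrightarrow> exists_prefix (confined_finish A B m w)
    = (if up_count w = m \<and> fst w \<in> {- int B<..<int A} then UNIV else {})"
  by (auto simp: exists_prefix_def confined_finish_def finish_with_def walk_run_frozen visited_frozen)

lemma exists_prefix_confined_SCons:
  assumes "0 < returns_left w" "fst w \<in> {- int B<..<int A}"
  shows "{\<omega>. t ## \<omega> \<in> exists_prefix (confined_finish A B m w)}
    = exists_prefix (confined_finish A B m (walk_next w (fst t)))"
proof -
  have "confined_finish A B m w (stake n (t ## \<omega>)) \<longleftrightarrow>
      (\<exists>n'. n = Suc n' \<and> confined_finish A B m (walk_next w (fst t)) (stake n' \<omega>))" for n \<omega>
    using assms by (cases n) (auto simp: confined_finish_Cons, simp add: confined_finish_def finish_with_def)
  then show ?thesis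
    by (auto simp: exists_prefix_def)
qed

lemma exists_prefix_finish_with_Union:
  "exists_prefix (finish_with m w :: 'f innov list \<Rightarrow> bool)
    = (\<Union>A. exists_prefix (confined_finish (Suc A) (Suc A) m w))"
proof (intro equalityI subsetI)
  fix \<omega> :: "'f innov stream" assume "\<omega> \<in> exists_prefix (finish_with m w)"
  then obtain n where n: "finish_with m w (stake n \<omega>)"
    by (auto simp: exists_prefix_def)
  obtain l h where "visited w (stake n \<omega>) = {l..h}"
    using visited_interval by blast
  then have "confined_finish (Suc (nat (max (- l) h))) (Suc (nat (max (- l) h))) m w (stake n \<omega>)"
    using n by (auto simp: confined_finish_def)
  then show "\<omega> \<in> (\<Union>A. exists_prefix (confined_finish (Suc A) (Suc A) m w))"
    by (auto simp: exists_prefix_def)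
qed (auto simp: exists_prefix_def confined_finish_def)

lemma exists_prefix_finish_with_iff:
  fixes \<omega> :: "'f::group_add innov stream"
  assumes "\<omega> \<in> exists_prefix (\<lambda>xs. returns_left (walk_run (0, k, 0) xs) = 0)"
  shows "\<omega> \<in> exists_prefix (finish_with m (0, k, 0)) \<longleftrightarrow> Nplus \<omega> k = m"
proof
  assume "\<omega> \<in> exists_prefix (finish_with m (0, k, 0))"
  then obtain n where "finish_with m (0, k, 0) (stake n \<omega>)"
    by (auto simp: exists_prefix_def)
  then show "Nplus \<omega> k = m"
    using walk_run_finished(1)[of k n \<omega>] by (simp add: finish_with_def)
next
  obtain n where "returns_left (walk_run (0, k, 0) (stake n \<omega>)) = 0"
    using assms by (auto simp: exists_prefix_def)
  moreover assume "Nplus \<omega> k = m"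
  ultimately have "finish_with m (0, k, 0) (stake n \<omega>)"
    using walk_run_finished(1)[of k n \<omega>] by (simp add: finish_with_def)
  then show "\<omega> \<in> exists_prefix (finish_with m (0, k, 0))"
    by (auto simp: exists_prefix_def)
qed

lemma exists_prefix_dark_finish_iff:
  fixes \<omega> :: "'f::group_add innov stream"
  assumes "\<omega> \<in> exists_prefix (\<lambda>xs. returns_left (walk_run (0, k, 0) xs) = 0)"
  shows "\<omega> \<in> exists_prefix (dark_finish m (\<lambda>i. 0) (0, k, 0)) \<longleftrightarrow>
    lstate \<omega> (rho \<omega> k) = ((\<lambda>i. 0), 0) \<and> Nplus \<omega> k = m"
proof
  assume "\<omega> \<in> exists_prefix (dark_finish m (\<lambda>i. 0) (0, k, 0))"
  then obtain n where "dark_finish m (\<lambda>i. 0) (0, k, 0) (stake n \<omega>)"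
    by (auto simp: exists_prefix_def)
  then show "lstate \<omega> (rho \<omega> k) = ((\<lambda>i. 0), 0) \<and> Nplus \<omega> k = m"
    using walk_run_finished[of k n \<omega>] by (simp add: dark_finish_def finish_with_def)
next
  obtain n where "returns_left (walk_run (0, k, 0) (stake n \<omega>)) = 0"
    using assms by (auto simp: exists_prefix_def)
  moreover assume "lstate \<omega> (rho \<omega> k) = ((\<lambda>i. 0), 0) \<and> Nplus \<omega> k = m"
  ultimately have "dark_finish m (\<lambda>i. 0) (0, k, 0) (stake n \<omega>)"
    using walk_run_finished[of k n \<omega>] by (simp add: dark_finish_def finish_with_def)
  then show "\<omega> \<in> exists_prefix (dark_finish m (\<lambda>i. 0) (0, k, 0))"
    by (auto simp: exists_prefix_def)
qed

section \<open>Averaging over the lamps\<close>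

definition vanishes_outside :: "('i \<Rightarrow> 'f::zero) \<Rightarrow> 'i set \<Rightarrow> bool" where
  "vanishes_outside L V \<longleftrightarrow> (\<forall>i. i \<notin> V \<longrightarrow> L i = 0)"

lemma sum_vanishes_outside_upd:
  fixes L :: "'i \<Rightarrow> 'f::{finite,zero}"
  assumes "finite V"
  shows "(\<Sum>v\<in>UNIV. of_bool (vanishes_outside (L(y := v)) V)) / real CARD('f)
    = of_bool (vanishes_outside L (insert y V)) / real CARD('f) ^ (card (insert y V) - card V)"
proof (cases "y \<in> V")
  case True
  then have "vanishes_outside (L(y := v)) V = vanishes_outside L (insert y V)" for v
    by (auto simp: vanishes_outside_def)
  then show ?thesis using True by (simp add: insert_absorb)
next
  case False
  then have "vanishes_outside (L(y := v)) V = (v = 0 \<and> vanishes_outside L (insert y V))" for v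
    by (auto simp: vanishes_outside_def)
  then have "(\<Sum>v\<in>UNIV. of_bool (vanishes_outside (L(y := v)) V))
      = (\<Sum>v\<in>UNIV. if v = (0::'f) then of_bool (vanishes_outside L (insert y V)) else (0::real))"
    by (intro sum.cong) auto
  then show ?thesis using False assms by simp
qed

lemma sum_sum_vanishes_outside_upd:
  fixes L :: "'i \<Rightarrow> 'f::{finite,zero}"
  assumes "finite V"
  shows "(\<Sum>u\<in>UNIV. \<Sum>v\<in>UNIV. of_bool (vanishes_outside ((L(x := u))(y := v)) V)) / real CARD('f) ^ 2
    = of_bool (vanishes_outside L (insert x (insert y V)))
      / real CARD('f) ^ (card (insert x (insert y V)) - card V)"
proof -
  define X where "X = real CARD('f)"
  define a where "a = card (insert y V) - card V"
  define b where "b = card (insert x (insert y V)) - card (insert y V)"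
  have "X > 0" by (simp add: X_def)
  have pow: "X ^ (card (insert x (insert y V)) - card V) = X ^ a * X ^ b"
    using assms by (simp add: a_def b_def card_insert_if power_add[symmetric])
  have "(\<Sum>v\<in>UNIV. of_bool (vanishes_outside ((L(x := u))(y := v)) V))
      = X / X ^ a * of_bool (vanishes_outside (L(x := u)) (insert y V))" for u
    using sum_vanishes_outside_upd[OF assms, of "L(x := u)" y] \<open>X > 0\<close> unfolding X_def a_def
    by (simp add: field_simps del: sum_of_bool_eq)
  then have "(\<Sum>u\<in>UNIV. \<Sum>v\<in>UNIV. of_bool (vanishes_outside ((L(x := u))(y := v)) V))
      = (\<Sum>u\<in>UNIV. X / X ^ a * of_bool (vanishes_outside (L(x := u)) (insert y V)))"
    by simp
  also have "\<dots> = X / X ^ a * (\<Sum>u\<in>UNIV. of_bool (vanishes_outside (L(x := u)) (insert y V)))"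
    by (rule sum_distrib_left[symmetric])
  also have "\<dots> = X / X ^ a * (X * (of_bool (vanishes_outside L (insert x (insert y V))) / X ^ b))"
    using sum_vanishes_outside_upd[of "insert y V" L x] assms \<open>X > 0\<close> unfolding X_def b_def
    by (simp add: field_simps del: sum_of_bool_eq)
  finally show ?thesis
    using \<open>X > 0\<close> unfolding X_def[symmetric] pow
    by (simp add: power2_eq_square field_simps del: sum_of_bool_eq)
qed

text \<open>Given the coin flips \<open>xs\<close>, every site visited by an active walk ends up with a fresh
  uniform lamp while the other sites keep their value from \<open>L\<close>; this is the conditional
  probability that all lamps are off when the walk finishes.\<close>

definition dark_weight :: "nat \<Rightarrow> (int \<Rightarrow> 'f::{finite,zero}) \<Rightarrow> wstate \<Rightarrow> 'f innov list \<Rightarrow> real" where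
  "dark_weight m L w xs =
     (if returns_left w = 0 then of_bool (up_count w = m \<and> L = (\<lambda>i. 0))
      else of_bool (finish_with m w xs \<and> vanishes_outside L (visited w xs)) / real CARD('f) ^ card (visited w xs))"

lemma dark_weight_nonneg [simp]: "0 \<le> dark_weight m L w xs"
  by (simp add: dark_weight_def)

lemma sum_dark_weight_walk_next:
  fixes L :: "int \<Rightarrow> 'f::{finite,zero}"
  assumes active: "0 < returns_left w"
  shows "(\<Sum>u\<in>UNIV. \<Sum>v\<in>UNIV. dark_weight m ((L(fst w := u))(fst (walk_next w c) := v)) (walk_next w c) xs)
      / real CARD('f) ^ 2
    = dark_weight m L w ((c, uv) # xs)"
proof -
  define w' where "w' = walk_next w c"
  define V where "V = (if returns_left w' = 0 then {} else visited w' xs)"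
  define V'' where "V'' = insert (fst w) (insert (fst w') V)"
  define F where "F = finish_with m w' xs"
  define X where "X = real CARD('f)"
  have "finite V" "X > 0" by (simp_all add: V_def X_def)
  have "V'' = visited w ((c, uv) # xs)"
    using active fst_in_visited[of w' xs] by (auto simp: V''_def V_def w'_def visited_frozen)
  then have rhs: "dark_weight m L w ((c, uv) # xs) = of_bool F * of_bool (vanishes_outside L V'') / X ^ card V''"
    using active by (simp add: dark_weight_def F_def finish_with_def w'_def X_def)
  have weight: "dark_weight m L' w' xs = of_bool F * of_bool (vanishes_outside L' V) / X ^ card V"
    for L' :: "int \<Rightarrow> 'f"
    by (auto simp: dark_weight_def V_def F_def X_def finish_with_def walk_run_frozen
        vanishes_outside_def fun_eq_iff)
  have "card V \<le> card V''"
    using \<open>finite V\<close> by (auto simp: V''_def intro: card_mono)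
  then have pow: "X ^ card V'' = X ^ (card V'' - card V) * X ^ card V"
    by (simp add: power_add[symmetric])
  have "(\<Sum>u\<in>UNIV. \<Sum>v\<in>UNIV. dark_weight m ((L(fst w := u))(fst w' := v)) w' xs) / X ^ 2
      = of_bool F / X ^ card V *
        ((\<Sum>u\<in>UNIV. \<Sum>v\<in>UNIV. of_bool (vanishes_outside ((L(fst w := u))(fst w' := v)) V)) / X ^ 2)"
    by (simp add: weight sum_distrib_left sum_divide_distrib del: sum_of_bool_eq)
  also have "\<dots> = of_bool F / X ^ card V * (of_bool (vanishes_outside L V'') / X ^ (card V'' - card V))"
    using sum_sum_vanishes_outside_upd[OF \<open>finite V\<close>, of L "fst w" "fst w'"]
    by (simp add: V''_def X_def)
  finally show ?thesis
    using \<open>X > 0\<close> by (simp add: rhs pow w'_def X_def[symmetric])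
qed

lemma dark_weight_start:
  fixes L :: "int \<Rightarrow> 'f::{finite,zero}"
  assumes "0 < k" "2 \<le> CARD('f)"
  defines "X \<equiv> 1 / real CARD('f)"
  shows "ennreal (dark_weight m (\<lambda>i. 0 :: 'f) (0, k, 0) xs) = ennreal ((1 - X)\<^sup>2 / X) *
    (\<Sum>a. \<Sum>b. ennreal (X ^ Suc a * X ^ Suc b) * of_bool (confined_finish (Suc a) (Suc b) m (0, k, 0) xs))"
proof -
  obtain l h where lh: "visited (0, k, 0) xs = {l..h}" "l \<le> 0" "0 \<le> h"
    using visited_interval[of "(0, k, 0)" xs] by auto
  define H where "H = nat h"
  define L where "L = nat (- l)"
  have "X > 0" "X < 1" using assms by (auto simp: X_def)
  have "card (visited (0, k, 0) xs) = H + L + 1"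
    using lh by (simp add: H_def L_def nat_add_distrib[symmetric])
  then have weight: "dark_weight m (\<lambda>i. 0 :: 'f) (0, k, 0) xs = of_bool (finish_with m (0, k, 0) xs) * X ^ (H + L + 1)"
    using assms by (simp add: dark_weight_def vanishes_outside_def X_def power_one_over)
  have "confined_finish (Suc a) (Suc b) m (0, k, 0) xs \<longleftrightarrow> finish_with m (0, k, 0) xs \<and> H \<le> a \<and> L \<le> b" for a b
    using lh by (auto simp: confined_finish_def H_def L_def subset_eq)
  then show ?thesis
    using power_eq_double_tail_suminf[OF \<open>X > 0\<close> \<open>X < 1\<close>, of H L]
    by (cases "finish_with m (0, k, 0) xs") (simp_all add: weight)
qed

lemma pmf_step_pmf:
  assumes "0 \<le> p" "p \<le> 1"
  shows "pmf (step_pmf p :: 'f::finite innov pmf) (c, uv) = (if fst c then p else 1 - p) / 2 / real CARD('f) ^ 2"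
  using assms by (cases c; cases uv) (simp add: step_pmf_def pmf_pair power2_eq_square)

lemma sum_UNIV_pair: "(\<Sum>t\<in>UNIV. f t) = (\<Sum>a\<in>UNIV. \<Sum>b\<in>UNIV. f (a, b))"
  for f :: "'a::finite \<times> 'b::finite \<Rightarrow> 'c::comm_monoid_add"
  by (subst sum.cartesian_product) simp

lemma sum_step_pmf:
  fixes f :: "'f::finite innov \<Rightarrow> real"
  assumes "0 \<le> p" "p \<le> 1"
  shows "(\<Sum>t\<in>UNIV. pmf (step_pmf p) t * f t)
    = (\<Sum>c\<in>UNIV. (if fst c then p else 1 - p) / 2 * ((\<Sum>u\<in>UNIV. \<Sum>v\<in>UNIV. f (c, (u, v))) / real CARD('f) ^ 2))"
proof -
  have "(\<Sum>t\<in>UNIV. pmf (step_pmf p) t * f t)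
      = (\<Sum>c\<in>UNIV. \<Sum>u\<in>UNIV. \<Sum>v\<in>UNIV. pmf (step_pmf p) (c, (u, v)) * f (c, (u, v)))"
    unfolding sum_UNIV_pair[of "\<lambda>t. pmf (step_pmf p) t * f t"] by (intro sum.cong refl sum_UNIV_pair)
  then show ?thesis
    using assms by (simp add: pmf_step_pmf sum_distrib_left sum_divide_distrib)
qed

lemma sum_step_pmf_fst:
  fixes g :: "bool \<times> bool \<Rightarrow> real"
  assumes "0 \<le> p" "p \<le> 1"
  shows "(\<Sum>t\<in>UNIV. pmf (step_pmf p :: 'f::finite innov pmf) t * g (fst t))
    = (\<Sum>c\<in>UNIV. (if fst c then p else 1 - p) / 2 * g c)"
  using assms by (simp add: sum_step_pmf power2_eq_square)

lemma lpos_lamps_shift: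
  "s \<le> t \<Longrightarrow> lpos (stake t \<omega> @- \<omega>') s = lpos \<omega> s \<and> lamps (stake t \<omega> @- \<omega>') s = lamps \<omega> s"
  by (induction s) auto

lemma measurable_lstate:
  fixes P :: "'f::{countable,group_add} innov pmf"
  assumes "\<And>s. f s \<in> space N"
  shows "(\<lambda>\<omega>. f (lstate \<omega> t)) \<in> stream_space (measure_pmf P) \<rightarrow>\<^sub>M N"
proof -
  have "(\<lambda>\<omega>. f (lstate \<omega> t)) = (\<lambda>\<omega>. f (lstate (stake t \<omega> @- sconst undefined) t))"
    by (simp add: lstate_def lpos_lamps_shift)
  then show ?thesis
    using measurable_stake_pmf[of "\<lambda>xs. f (lstate (xs @- sconst undefined) t)"] assms by simp
qed

lemma measurable_lpos:
  "(\<lambda>\<omega>. lpos \<omega> t) \<in> stream_space (measure_pmf (P :: 'f::{countable,group_add} innov pmf)) \<rightarrow>\<^sub>M count_space UNIV"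
  using measurable_lstate[where f=snd and N="count_space UNIV" and P=P] by (simp add: lstate_def)

lemma measurable_rho:
  "(\<lambda>\<omega>. rho \<omega> i) \<in> stream_space (measure_pmf (P :: 'f::{countable,group_add} innov pmf)) \<rightarrow>\<^sub>M count_space UNIV"
proof (induction i)
  case (Suc i)
  have zero: "(\<lambda>\<omega>. lpos \<omega> n = 0) \<in> stream_space (measure_pmf P) \<rightarrow>\<^sub>M count_space UNIV" for n
    by (rule measurable_compose[OF measurable_lpos]) simp
  have "(\<lambda>\<omega>. rho \<omega> i < n \<and> lpos \<omega> n = 0) \<in> stream_space (measure_pmf P) \<rightarrow>\<^sub>M count_space UNIV" for n
  proof (rule measurable_compose_countable'[where f="\<lambda>r \<omega>. r < n \<and> lpos \<omega> n = 0" and I=UNIV])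
    show "(\<lambda>\<omega>. r < n \<and> lpos \<omega> n = 0) \<in> stream_space (measure_pmf P) \<rightarrow>\<^sub>M count_space UNIV" for r
      using zero by (cases "r < n") simp_all
  qed (simp_all add: Suc.IH)
  then show ?case
    unfolding rho.simps by (rule measurable_Least)
qed simp

lemma measurable_Nplus:
  "(\<lambda>\<omega>. Nplus \<omega> i) \<in> stream_space (measure_pmf (P :: 'f::{countable,group_add} innov pmf)) \<rightarrow>\<^sub>M count_space UNIV"
proof (induction i)
  case (Suc i)
  have "(\<lambda>\<omega>. lpos \<omega> (rho \<omega> i + 1)) \<in> stream_space (measure_pmf P) \<rightarrow>\<^sub>M count_space UNIV"
    by (rule measurable_compose_countable'[where f="\<lambda>r \<omega>. lpos \<omega> (r + 1)" and I=UNIV])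
      (rule measurable_lpos, rule measurable_rho, simp)
  then have "(\<lambda>\<omega>. r + of_bool (0 < lpos \<omega> (rho \<omega> i + 1))) \<in> stream_space (measure_pmf P) \<rightarrow>\<^sub>M count_space UNIV"
    for r :: nat
    by (rule measurable_compose) simp
  then show ?case
    unfolding Nplus_Suc
    by (rule measurable_compose_countable'[where g="\<lambda>\<omega>. Nplus \<omega> i" and I=UNIV]) (simp_all add: Suc.IH)
qed (simp add: Nplus_def)

section \<open>Probabilities for the walk with drift towards 0\<close>

text \<open>The innovation law \<open>P = step_pmf p\<close> is a parameter so that the lamp type \<open>'f\<close> is fixed
  by the locale parameters, which the definitions inside the locale rely on.\<close>

locale lamplighter_walk =
  fixes p :: real and P :: "'f::{finite,group_add} innov pmf"
  assumes half_lt_p: "1/2 < p" and p_lt_1: "p < 1" and P_eq: "P = step_pmf p"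
begin

abbreviation M :: "'f innov stream measure" where
  "M \<equiv> stream_space (measure_pmf P)"

sublocale M: prob_space M
  by (rule prob_space.prob_space_stream_space[OF prob_space_measure_pmf])

lemma p_bounds: "0 \<le> p" "p \<le> 1"
  using half_lt_p p_lt_1 by auto

lemma sum_pmf_fst:
  "(\<Sum>t\<in>UNIV. pmf P t * g (fst t)) = (\<Sum>c\<in>UNIV. (if fst c then p else 1 - p) / 2 * g c)"
  unfolding P_eq by (rule sum_step_pmf_fst[OF p_bounds])

abbreviation lam :: real where
  "lam \<equiv> p / (1 - p)"

lemma lam_gt_1: "1 < lam"
  using half_lt_p p_lt_1 by (simp add: field_simps)

lemma sum_pmf_dark_weight:
  fixes L :: "int \<Rightarrow> 'f"
  assumes "0 < returns_left w"
  shows "(\<Sum>t\<in>UNIV. pmf P t *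
        dark_weight m ((L(fst w := fst (snd t)))(fst (walk_next w (fst t)) := snd (snd t))) (walk_next w (fst t)) xs)
    = (\<Sum>t\<in>UNIV. pmf P t * dark_weight m L w (t # xs))"
proof -
  have lhs: "(\<Sum>u\<in>UNIV. \<Sum>v\<in>UNIV. dark_weight m ((L(fst w := u))(fst (walk_next w c) := v)) (walk_next w c) xs)
      / real CARD('f) ^ 2 = dark_weight m L w ((c, (0, 0)) # xs)" for c
    by (rule sum_dark_weight_walk_next[OF assms])
  have "(\<Sum>u\<in>UNIV. \<Sum>v\<in>UNIV. dark_weight m L w ((c, (u, v)) # xs))
      = (\<Sum>u\<in>(UNIV::'f set). \<Sum>v\<in>(UNIV::'f set). dark_weight m L w ((c, (0, 0)) # xs))" for c
    by (intro sum.cong refl) (simp add: dark_weight_def finish_with_def)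
  then have rhs: "(\<Sum>u\<in>UNIV. \<Sum>v\<in>UNIV. dark_weight m L w ((c, (u, v)) # xs)) / real CARD('f) ^ 2
      = dark_weight m L w ((c, (0, 0)) # xs)" for c
    by (simp add: power2_eq_square)
  show ?thesis
    unfolding P_eq by (simp only: sum_step_pmf[OF p_bounds] fst_conv snd_conv lhs rhs)
qed

lemma emeasure_dark_finish:
  "emeasure M {\<omega>. dark_finish m L w (stake n \<omega>)} = (\<integral>\<^sup>+\<omega>. ennreal (dark_weight m L w (stake n \<omega>)) \<partial>M)"
proof (induction n arbitrary: L w)
  case 0
  show ?case
    by (cases "returns_left w = 0")
      (simp_all add: dark_finish_frozen dark_weight_def M.emeasure_space_1,
       simp add: dark_finish_def finish_with_def)
next
  case (Suc n)
  show ?case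
  proof (cases "returns_left w = 0")
    case True
    then show ?thesis
      by (simp add: dark_finish_frozen dark_weight_def M.emeasure_space_1)
  next
    case False
    then have active: "0 < returns_left w" by simp
    define G where "G t xs = dark_weight m ((L(fst w := fst (snd t)))(fst (walk_next w (fst t)) := snd (snd t)))
      (walk_next w (fst t)) xs" for t xs
    have "emeasure M {\<omega>. dark_finish m L w (stake (Suc n) \<omega>)}
        = (\<Sum>t\<in>UNIV. ennreal (pmf P t) * emeasure M {\<omega>. dark_finish m L w (t # stake n \<omega>)})"
      by (subst emeasure_stream_space_pmf) (rule sets_stake_pmf, simp)
    also have "\<dots> = (\<Sum>t\<in>UNIV. ennreal (pmf P t) * (\<integral>\<^sup>+\<omega>. ennreal (G t (stake n \<omega>)) \<partial>M))"
      unfolding dark_finish_Cons[OF active] G_def Suc.IH ..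
    also have "\<dots> = (\<integral>\<^sup>+\<omega>. ennreal (\<Sum>t\<in>UNIV. pmf P t * G t (stake n \<omega>)) \<partial>M)"
      by (rule nn_integral_sum_stake) (auto simp: G_def)
    also have "\<dots> = (\<integral>\<^sup>+\<omega>. ennreal (\<Sum>t\<in>UNIV. pmf P t * dark_weight m L w (t # stake n \<omega>)) \<partial>M)"
      unfolding G_def sum_pmf_dark_weight[OF active] ..
    also have "\<dots> = (\<Sum>t\<in>UNIV. ennreal (pmf P t) * (\<integral>\<^sup>+\<omega>. ennreal (dark_weight m L w (t # stake n \<omega>)) \<partial>M))"
      by (rule nn_integral_sum_stake[where g="\<lambda>t xs. dark_weight m L w (t # xs)", symmetric]) auto
    also have "\<dots> = (\<integral>\<^sup>+\<omega>. ennreal (dark_weight m L w (stake (Suc n) \<omega>)) \<partial>M)"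
      by (rule nn_integral_stake_Suc[symmetric])
    finally show ?thesis .
  qed
qed

definition confined_prob :: "nat \<Rightarrow> nat \<Rightarrow> nat \<Rightarrow> wstate \<Rightarrow> real" where
  "confined_prob A B m w = measure M (exists_prefix (confined_finish A B m w))"

lemma confined_prob_outside: "fst w \<notin> {- int B<..<int A} \<Longrightarrow> confined_prob A B m w = 0"
  by (simp add: confined_prob_def exists_prefix_confined_outside)

lemma confined_prob_frozen:
  "returns_left w = 0 \<Longrightarrow> fst w \<in> {- int B<..<int A} \<Longrightarrow> confined_prob A B m w = of_bool (up_count w = m)"
  using M.prob_space by (simp add: confined_prob_def exists_prefix_confined_frozen)

lemma confined_prob_step:
  assumes "0 < returns_left w" "fst w \<in> {- int B<..<int A}"
  shows "confined_prob A B m w = (\<Sum>c\<in>UNIV. (if fst c then p else 1 - p) / 2 * confined_prob A B m (walk_next w c))"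
proof -
  have "ennreal (confined_prob A B m w) = emeasure M (exists_prefix (confined_finish A B m w))"
    by (simp add: confined_prob_def M.emeasure_eq_measure)
  also have "\<dots> = (\<Sum>t\<in>UNIV. ennreal (pmf P t) * emeasure M {\<omega>. t ## \<omega> \<in> exists_prefix (confined_finish A B m w)})"
    by (rule emeasure_stream_space_pmf[OF sets_exists_prefix])
  also have "\<dots> = (\<Sum>t\<in>UNIV. ennreal (pmf P t) * ennreal (confined_prob A B m (walk_next w (fst t))))"
    using assms by (simp add: exists_prefix_confined_SCons confined_prob_def M.emeasure_eq_measure)
  also have "\<dots> = ennreal (\<Sum>t\<in>UNIV. pmf P t * confined_prob A B m (walk_next w (fst t)))"
    by (subst sum_ennreal[symmetric]) (auto simp: ennreal_mult confined_prob_def)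
  finally have "confined_prob A B m w = (\<Sum>t\<in>UNIV. pmf P t * confined_prob A B m (walk_next w (fst t)))"
    by (subst (asm) ennreal_inj) (auto simp: confined_prob_def intro!: sum_nonneg)
  then show ?thesis
    using sum_pmf_fst[where g="\<lambda>c. confined_prob A B m (walk_next w c)"] by simp
qed

lemma confined_prob_pos:
  assumes "0 < j" "0 < y" "y < int A"
  shows "confined_prob A B m (y, j, c)
    = p * confined_prob A B m (y - 1, if y = 1 then j - 1 else j, c) + (1 - p) * confined_prob A B m (y + 1, j, c)"
  using assms by (subst confined_prob_step) (auto simp: walk_next_def walk_step_def sum_UNIV_pair UNIV_bool Let_def algebra_simps)

lemma confined_prob_neg:
  assumes "0 < j" "y < 0" "- int B < y"
  shows "confined_prob A B m (y, j, c)
    = p * confined_prob A B m (y + 1, if y = -1 then j - 1 else j, c) + (1 - p) * confined_prob A B m (y - 1, j, c)"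
  using assms by (subst confined_prob_step) (auto simp: walk_next_def walk_step_def sum_UNIV_pair UNIV_bool Let_def algebra_simps)

lemma confined_prob_zero:
  assumes "0 < j" "1 \<le> A" "1 \<le> B"
  shows "confined_prob A B m (0, j, c) = (confined_prob A B m (1, j, Suc c) + confined_prob A B m (-1, j, c)) / 2"
  using assms by (subst confined_prob_step) (auto simp: walk_next_def walk_step_def sum_UNIV_pair UNIV_bool Let_def field_simps)

lemma confined_prob_up:
  assumes "1 \<le> A" "0 < j"
  shows "confined_prob A B m (1, j, c) = confined_prob A B m (0, j - 1, c) * ruin_prob lam A"
proof -
  define h where "h y = (if y = 0 then confined_prob A B m (0, j - 1, c) else confined_prob A B m (int y, j, c))"
    for y :: nat
  have "h y = p * h (y - 1) + (1 - p) * h (y + 1)" if "0 < y" "y < A" for y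
  proof -
    have "h (y - 1) = confined_prob A B m (int y - 1, if int y = 1 then j - 1 else j, c)"
      using that by (cases "y = 1") (auto simp: h_def)
    moreover have "h (y + 1) = confined_prob A B m (int y + 1, j, c)"
      by (simp add: h_def add.commute)
    ultimately show ?thesis
      using confined_prob_pos[of j "int y" A] that assms by (simp add: h_def)
  qed
  moreover have "h A = 0"
    using assms by (simp add: h_def confined_prob_outside)
  ultimately have "h 1 = h 0 * ruin_prob lam A"
    using half_lt_p p_lt_1 assms by (intro ruin_prob_harmonic) auto
  then show ?thesis by (simp add: h_def)
qed

lemma confined_prob_down:
  assumes "1 \<le> B" "0 < j"
  shows "confined_prob A B m (-1, j, c) = confined_prob A B m (0, j - 1, c) * ruin_prob lam B"
proof -
  define h where "h y = (if y = 0 then confined_prob A B m (0, j - 1, c) else confined_prob A B m (- int y, j, c))"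
    for y :: nat
  have "h y = p * h (y - 1) + (1 - p) * h (y + 1)" if "0 < y" "y < B" for y
  proof -
    have "h (y - 1) = confined_prob A B m (- int y + 1, if - int y = -1 then j - 1 else j, c)"
      using that by (cases "y = 1") (auto simp: h_def)
    moreover have "h (y + 1) = confined_prob A B m (- int y - 1, j, c)"
      by (simp add: h_def, rule arg_cong[where f="\<lambda>z. confined_prob A B m (z, j, c)"], linarith)
    ultimately show ?thesis
      using confined_prob_neg[of j "- int y" B] that assms by (simp add: h_def)
  qed
  moreover have "h B = 0"
    using assms by (simp add: h_def confined_prob_outside)
  ultimately have "h 1 = h 0 * ruin_prob lam B"
    using half_lt_p p_lt_1 assms by (intro ruin_prob_harmonic) auto
  then show ?thesis by (simp add: h_def)
qed

lemma confined_prob_start: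
  assumes "1 \<le> A" "1 \<le> B"
  shows "confined_prob A B m (0, k, 0) = real (k choose m) * (ruin_prob lam A / 2) ^ m * (ruin_prob lam B / 2) ^ (k - m)"
proof -
  have "confined_prob A B m (0, k, c) = (if c \<le> m then real (k choose (m - c)) * (ruin_prob lam A / 2) ^ (m - c)
      * (ruin_prob lam B / 2) ^ (k - (m - c)) else 0)" for c
  proof (rule binomial_recurrence_solution[where f="\<lambda>j c. confined_prob A B m (0, j, c)"])
    show "confined_prob A B m (0, 0, c) = of_bool (c = m)" for c
      using assms by (simp add: confined_prob_frozen)
    show "confined_prob A B m (0, Suc j, c) = ruin_prob lam A / 2 * confined_prob A B m (0, j, Suc c)
        + ruin_prob lam B / 2 * confined_prob A B m (0, j, c)" for j c
      using assms by (simp add: confined_prob_zero confined_prob_up confined_prob_down field_simps)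
  qed
  then show ?thesis by simp
qed

lemma confined_prob_start_weighted:
  assumes "m \<le> k" "0 \<le> X"
  shows "ennreal (X ^ Suc a * X ^ Suc b) * ennreal (confined_prob (Suc a) (Suc b) m (0, k, 0))
    = ennreal (real (k choose m) / 2 ^ k * (X ^ Suc a * ruin_prob lam (Suc a) ^ m)
        * (X ^ Suc b * ruin_prob lam (Suc b) ^ (k - m)))"
proof -
  have "(2::real) ^ k = 2 ^ m * 2 ^ (k - m)"
    using assms(1) by (simp add: power_add[symmetric])
  moreover have "confined_prob (Suc a) (Suc b) m (0, k, 0)
      = real (k choose m) * (ruin_prob lam (Suc a) / 2) ^ m * (ruin_prob lam (Suc b) / 2) ^ (k - m)"
    by (rule confined_prob_start) simp_all
  ultimately have "X ^ Suc a * X ^ Suc b * confined_prob (Suc a) (Suc b) m (0, k, 0)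
      = real (k choose m) / 2 ^ k * (X ^ Suc a * ruin_prob lam (Suc a) ^ m)
        * (X ^ Suc b * ruin_prob lam (Suc b) ^ (k - m))"
    by (simp add: field_simps)
  moreover have "ennreal (X ^ Suc a * X ^ Suc b) * ennreal (confined_prob (Suc a) (Suc b) m (0, k, 0))
      = ennreal (X ^ Suc a * X ^ Suc b * confined_prob (Suc a) (Suc b) m (0, k, 0))"
    using assms(2) by (simp add: ennreal_mult confined_prob_def)
  ultimately show ?thesis by simp
qed

lemma measure_finish_with:
  assumes "m \<le> k"
  shows "measure M (exists_prefix (finish_with m (0, k, 0))) = real (k choose m) / 2 ^ k"
proof -
  have "incseq (\<lambda>A. exists_prefix (confined_finish (Suc A) (Suc A) m (0, k, 0)))"
    by (intro monoI exists_prefix_mono) (auto elim: confined_finish_mono)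
  then have "(\<lambda>A. confined_prob (Suc A) (Suc A) m (0, k, 0))
      \<longlonglongrightarrow> measure M (exists_prefix (finish_with m (0, k, 0)))"
    unfolding confined_prob_def exists_prefix_finish_with_Union
    by (intro M.finite_Lim_measure_incseq) (auto simp: sets_exists_prefix)
  moreover have "(\<lambda>A. confined_prob (Suc A) (Suc A) m (0, k, 0))
      \<longlonglongrightarrow> real (k choose m) * (1 / 2) ^ m * (1 / 2) ^ (k - m)"
    unfolding confined_prob_start[OF le_add1 le_add1, simplified]
    using ruin_prob_tendsto_1[OF lam_gt_1] by (intro tendsto_intros) auto
  ultimately show ?thesis
    using LIMSEQ_unique assms by (fastforce simp: power_add[symmetric] power_one_over)
qed

lemma prob_finished: "measure M (exists_prefix (\<lambda>xs. returns_left (walk_run (0, k, 0) xs) = 0)) = 1"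
proof -
  define E :: "nat \<Rightarrow> 'f innov stream set" where "E m = exists_prefix (finish_with m (0, k, 0))" for m
  define R :: "'f innov stream set" where "R = exists_prefix (\<lambda>xs. returns_left (walk_run (0, k, 0) xs) = 0)"
  have "disjoint_family_on E {..k}"
    unfolding disjoint_family_on_def E_def exists_prefix_def using finish_with_unique by blast
  moreover have "E m \<in> sets M" for m
    unfolding E_def by (rule sets_exists_prefix)
  ultimately have "measure M (\<Union>m\<in>{..k}. E m) = (\<Sum>m\<le>k. measure M (E m))"
    by (intro M.finite_measure_finite_Union) auto
  also have "\<dots> = (\<Sum>m\<le>k. real (k choose m)) / 2 ^ k"
    by (simp add: E_def measure_finish_with sum_divide_distrib)
  also have "\<dots> = 1"
    by (simp only: of_nat_sum[symmetric] choose_row_sum) simp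
  finally have "measure M (\<Union>m\<in>{..k}. E m) = 1" .
  moreover have "(\<Union>m\<in>{..k}. E m) \<subseteq> R"
    by (auto simp: E_def R_def exists_prefix_def finish_with_def)
  ultimately have "1 \<le> measure M R"
    using M.finite_measure_mono[of "\<Union>m\<in>{..k}. E m" R] by (simp add: R_def sets_exists_prefix)
  then show ?thesis
    using M.prob_le_1[of R] unfolding R_def by linarith
qed

lemma AE_finished: "AE \<omega> in M. \<omega> \<in> exists_prefix (\<lambda>xs. returns_left (walk_run (0, k, 0) xs) = 0)"
  by (rule M.AE_prob_1[OF prob_finished])

lemma emeasure_dark_finish_start:
  assumes "0 < k" "2 \<le> CARD('f)"
  defines "X \<equiv> 1 / real CARD('f)"
  shows "emeasure M {\<omega>. dark_finish m (\<lambda>i. 0) (0, k, 0) (stake n \<omega>)} = ennreal ((1 - X)\<^sup>2 / X) *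
    (\<Sum>a. \<Sum>b. ennreal (X ^ Suc a * X ^ Suc b) * emeasure M {\<omega>. confined_finish (Suc a) (Suc b) m (0, k, 0) (stake n \<omega>)})"
proof -
  have "emeasure M {\<omega>. dark_finish m (\<lambda>i. 0) (0, k, 0) (stake n \<omega>)}
      = (\<integral>\<^sup>+\<omega>. ennreal (dark_weight m (\<lambda>i. 0) (0, k, 0) (stake n \<omega>)) \<partial>M)"
    by (rule emeasure_dark_finish)
  also have "\<dots> = (\<integral>\<^sup>+\<omega>. ennreal ((1 - X)\<^sup>2 / X) * (\<Sum>a. \<Sum>b. ennreal (X ^ Suc a * X ^ Suc b)
      * of_bool (confined_finish (Suc a) (Suc b) m (0, k, 0) (stake n \<omega>))) \<partial>M)"
    using assms by (simp add: dark_weight_start)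
  also have "\<dots> = ennreal ((1 - X)\<^sup>2 / X) * (\<Sum>a. \<Sum>b. ennreal (X ^ Suc a * X ^ Suc b)
      * emeasure M {\<omega>. confined_finish (Suc a) (Suc b) m (0, k, 0) (stake n \<omega>)})"
    by (subst nn_integral_cmult) (rule measurable_stake_pmf, simp,
        simp only: nn_integral_suminf_suminf_of_bool_stake[where c="\<lambda>a b. ennreal (X ^ Suc a * X ^ Suc b)"
          and Q="\<lambda>a b. confined_finish (Suc a) (Suc b) m (0, k, 0)"])
  finally show ?thesis .
qed

lemma emeasure_dark_return:
  assumes "0 < k" "2 \<le> CARD('f)"
  defines "X \<equiv> 1 / real CARD('f)"
  shows "emeasure M (exists_prefix (dark_finish m (\<lambda>i. 0) (0, k, 0))) = ennreal ((1 - X)\<^sup>2 / X) *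
    (\<Sum>a. \<Sum>b. ennreal (X ^ Suc a * X ^ Suc b) * ennreal (confined_prob (Suc a) (Suc b) m (0, k, 0)))"
proof -
  define e where "e n a b = emeasure M {\<omega>. confined_finish (Suc a) (Suc b) m (0, k, 0) (stake n \<omega>)}" for n a b
  have "incseq (\<lambda>n. e n a b)" for a b
    unfolding e_def
    by (intro incseq_emeasure incseq_stake_sets) (auto simp: sets_stake_pmf confined_finish_append)
  then have inc: "incseq (\<lambda>n. ennreal (X ^ Suc a * X ^ Suc b) * e n a b)" for a b
    by (auto simp: incseq_def intro: mult_left_mono)
  have sup: "(SUP n. e n a b) = ennreal (confined_prob (Suc a) (Suc b) m (0, k, 0))" for a b
    using emeasure_exists_prefix[where Q="confined_finish (Suc a) (Suc b) m (0, k, 0)" and P=P,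
        OF confined_finish_append]
    unfolding e_def confined_prob_def by (simp add: M.emeasure_eq_measure)
  have "emeasure M (exists_prefix (dark_finish m (\<lambda>i. 0) (0, k, 0)))
      = (SUP n. emeasure M {\<omega>. dark_finish m (\<lambda>i. 0) (0, k, 0) (stake n \<omega>)})"
    by (rule emeasure_exists_prefix) (rule dark_finish_append)
  also have "\<dots> = (SUP n. ennreal ((1 - X)\<^sup>2 / X) * (\<Sum>a. \<Sum>b. ennreal (X ^ Suc a * X ^ Suc b) * e n a b))"
    using assms by (simp add: emeasure_dark_finish_start e_def)
  also have "\<dots> = ennreal ((1 - X)\<^sup>2 / X) * (\<Sum>a. \<Sum>b. SUP n. ennreal (X ^ Suc a * X ^ Suc b) * e n a b)"
    by (simp only: SUP_mult_left_ennreal[symmetric] SUP_suminf_suminf_ennreal[OF inc])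
  also have "\<dots> = ennreal ((1 - X)\<^sup>2 / X) * (\<Sum>a. \<Sum>b. ennreal (X ^ Suc a * X ^ Suc b)
      * ennreal (confined_prob (Suc a) (Suc b) m (0, k, 0)))"
    by (simp only: SUP_mult_left_ennreal[symmetric] sup)
  finally show ?thesis .
qed

lemma measure_dark_return:
  assumes "0 < k" "m \<le> k" "2 \<le> CARD('f)"
  defines "X \<equiv> 1 / real CARD('f)"
  shows "measure M (exists_prefix (dark_finish m (\<lambda>i. 0) (0, k, 0)))
    = (1 - X)\<^sup>2 / X * (real (k choose m) / 2 ^ k)
      * (\<Sum>a. X ^ Suc a * ruin_prob lam (Suc a) ^ m) * (\<Sum>b. X ^ Suc b * ruin_prob lam (Suc b) ^ (k - m))"
proof -
  have X: "0 < X" "X < 1" using assms(3) by (auto simp: X_def)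
  define u where "u a = real (k choose m) / 2 ^ k * (X ^ Suc a * ruin_prob lam (Suc a) ^ m)" for a
  define v where "v b = X ^ Suc b * ruin_prob lam (Suc b) ^ (k - m)" for b
  have ruin: "0 \<le> ruin_prob lam (Suc a)" for a
    using ruin_prob_bounds[OF lam_gt_1] by simp
  have u: "0 \<le> u a" "summable u" for a
    using X ruin lam_gt_1 unfolding u_def[abs_def] by (simp, intro summable_mult summable_power_ruin_prob) auto
  have v: "0 \<le> v b" "summable v" for b
    using X ruin lam_gt_1 unfolding v_def[abs_def] by (simp, intro summable_power_ruin_prob) auto
  have "ennreal (X ^ Suc a * X ^ Suc b) * ennreal (confined_prob (Suc a) (Suc b) m (0, k, 0))
      = ennreal (u a * v b)" for a b
    unfolding u_def v_def by (rule confined_prob_start_weighted[OF assms(2)]) (use X in simp)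
  then have "emeasure M (exists_prefix (dark_finish m (\<lambda>i. 0) (0, k, 0)))
      = ennreal ((1 - X)\<^sup>2 / X) * ennreal (suminf u * suminf v)"
    using assms by (simp add: emeasure_dark_return suminf_suminf_ennreal_mult[OF u(1) v(1) u(2) v(2)])
  also have "\<dots> = ennreal ((1 - X)\<^sup>2 / X * (suminf u * suminf v))"
  proof -
    have "0 \<le> (1 - X)\<^sup>2 / X" "0 \<le> suminf u" "0 \<le> suminf v"
      using X u v by (simp_all add: suminf_nonneg)
    then show ?thesis
      by (simp only: ennreal_mult[symmetric] mult_nonneg_nonneg)
  qed
  finally have "measure M (exists_prefix (dark_finish m (\<lambda>i. 0) (0, k, 0))) = (1 - X)\<^sup>2 / X * (suminf u * suminf v)"
    using X u v by (simp add: M.emeasure_eq_measure suminf_nonneg)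
  moreover have "suminf u = real (k choose m) / 2 ^ k * (\<Sum>a. X ^ Suc a * ruin_prob lam (Suc a) ^ m)"
    unfolding u_def[abs_def] using X lam_gt_1 by (intro suminf_mult summable_power_ruin_prob) auto
  ultimately show ?thesis
    by (simp add: v_def[abs_def] mult_ac)
qed

lemma prob_Nplus_eq:
  assumes "m \<le> k"
  shows "\<P>(\<omega> in M. Nplus \<omega> k = m) = real (k choose m) / 2 ^ k"
proof -
  have "\<P>(\<omega> in M. Nplus \<omega> k = m) = measure M (exists_prefix (finish_with m (0, k, 0)))"
  proof (rule M.finite_measure_eq_AE)
    show "AE \<omega> in M. \<omega> \<in> {\<omega> \<in> space M. Nplus \<omega> k = m} \<longleftrightarrow> \<omega> \<in> exists_prefix (finish_with m (0, k, 0))"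
      using AE_finished[of k] by eventually_elim (simp add: exists_prefix_finish_with_iff)
    show "{\<omega> \<in> space M. Nplus \<omega> k = m} \<in> sets M"
      by (intro predE measurable_compose[OF measurable_Nplus]) simp
  qed (rule sets_exists_prefix)
  with measure_finish_with assms show ?thesis by simp
qed

lemma prob_lstate_Nplus_eq:
  "\<P>(\<omega> in M. lstate \<omega> (rho \<omega> k) = ((\<lambda>i. 0), 0) \<and> Nplus \<omega> k = m)
    = measure M (exists_prefix (dark_finish m (\<lambda>i. 0) (0, k, 0)))"
proof (rule M.finite_measure_eq_AE)
  show "AE \<omega> in M. \<omega> \<in> {\<omega> \<in> space M. lstate \<omega> (rho \<omega> k) = ((\<lambda>i. 0), 0) \<and> Nplus \<omega> k = m}
      \<longleftrightarrow> \<omega> \<in> exists_prefix (dark_finish m (\<lambda>i. 0) (0, k, 0))"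
    using AE_finished[of k] by eventually_elim (simp add: exists_prefix_dark_finish_iff)
  have "(\<lambda>\<omega>. lstate \<omega> (rho \<omega> k) = ((\<lambda>i. 0), 0)) \<in> M \<rightarrow>\<^sub>M count_space UNIV"
    by (rule measurable_compose_countable'[where g="\<lambda>\<omega>. rho \<omega> k" and I=UNIV])
      (rule measurable_lstate, simp_all add: measurable_rho)
  then show "{\<omega> \<in> space M. lstate \<omega> (rho \<omega> k) = ((\<lambda>i. 0), 0) \<and> Nplus \<omega> k = m} \<in> sets M"
    by (intro predE pred_intros_logic measurable_compose[OF measurable_Nplus]) simp_all
qed (rule sets_exists_prefix)

lemma cond_prob_dark_return:
  assumes "0 < k" "m \<le> k" "2 \<le> CARD('f)"
  defines "X \<equiv> 1 / real CARD('f)"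
  shows "cond_prob M (\<lambda>\<omega>. lstate \<omega> (rho \<omega> k) = ((\<lambda>i. 0), 0)) (\<lambda>\<omega>. Nplus \<omega> k = m)
    = (1 - X)\<^sup>2 / X * (\<Sum>a. X ^ Suc a * ruin_prob lam (Suc a) ^ m) * (\<Sum>b. X ^ Suc b * ruin_prob lam (Suc b) ^ (k - m))"
  using assms
  unfolding cond_prob_def prob_lstate_Nplus_eq prob_Nplus_eq[OF assms(2)] measure_dark_return[OF assms(1-3)]
  by simp

end

theorem proposition2p4:
  fixes p lam :: real and k m :: nat
    and F_type :: "'f::{group_add, finite} itself"
  assumes "CARD('f) \<ge> 2"
    and "1/2 < p" and "p < 1"
    and "lam = p / (1 - p)"
    and "1 \<le> k" and "m \<le> k"
  shows "\<P>(\<omega> in (lamp_space p :: ((bool \<times> bool) \<times> ('f \<times> 'f)) stream measure).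
            lstate \<omega> (rho \<omega> k) = ((\<lambda>i. 0), 0) \<bar> Nplus \<omega> k = m)
         = (real CARD('f) - 1)^2 / real CARD('f)
           * (\<Sum>a. (1 / real CARD('f)) ^ (Suc a) * (1 - (lam - 1) / (lam ^ (Suc a) - 1)) ^ m)
           * (\<Sum>b. (1 / real CARD('f)) ^ (Suc b) * (1 - (lam - 1) / (lam ^ (Suc b) - 1)) ^ (k - m))"
proof -
  interpret lamplighter_walk p "step_pmf p :: 'f innov pmf"
    using assms by unfold_locales auto
  have "(1 - 1 / real CARD('f))\<^sup>2 / (1 / real CARD('f)) = (real CARD('f) - 1)\<^sup>2 / real CARD('f)"
    using assms(1) by (simp add: field_simps power2_eq_square)
  then show ?thesis
    using cond_prob_dark_return[of k m] assms by (simp add: lamp_space_def ruin_prob_def)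
qed

end
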